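(* Let $d\ge 3$ be a prime, $\omega=e^{2\pi i/d}$, and $-\frac{1}{d^2-1}\le p\le 1$. Let $\rho_{AB}=p\,|\Psi^+\rangle\langle\Psi^+|+(1-p)\frac{\mathbb{I}}{d^2}$ on $\mathbb{C}^d\otimes\mathbb{C}^d$, where $|\Psi^+\rangle=\frac{1}{\sqrt d}\sum_{i=0}^{d-1}|ii\rangle$. Consider the $d+1$ mutually unbiased bases consisting of the computational basis $\mathcal{Z}=\{|0\rangle,\dots,|d-1\rangle\}$, the Fourier basis $\mathcal{X}=\{\mathcal{F}|0\rangle,\dots,\mathcal{F}|d-1\rangle\}$, and the bases $M_k=\{D^k\mathcal{F}|l\rangle\}_{l=0}^{d-1}$ for $k=1,\dots,d-1$. Then $I(M_k^A:M_k^B)=0$ for every $k=1,\dots,d-1$, and $$I(Z^A:Z^B)=I(X^A:X^B)=2\log(d)+d\Big(\tfrac{p}{d}+\tfrac{1-p}{d^2}\Big)\log\Big(\tfrac{p}{d}+\tfrac{1-p}{d^2}\Big)+(d^2-d)\,\tfrac{1-p}{d^2}\log\Big(\tfrac{1-p}{d^2}\Big).$$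
   Context: Logarithms are base 2, $0\log 0=0$. $\mathcal{F}=\frac{1}{\sqrt d}\sum_{x,y=0}^{d-1}\omega^{xy}|x\rangle\langle y|$ and $D=\mathrm{diag}(\omega^{j^2})_{j=0}^{d-1}$. For a basis $\{|m_j\rangle\}$, $M^A,M^B$ are the outcomes when both parties measure their subsystem in that basis, with joint distribution $p(j,k)=\langle m_j\otimes m_k|\rho_{AB}|m_j\otimes m_k\rangle$, and $I(M^A:M^B)=H(M^A)+H(M^B)-H(M^AM^B)$ is the classical (Shannon) mutual information. *)

theory Defs
  imports Complex_Main "HOL-Computational_Algebra.Primes"
begin

text \<open>Vectors in C^d are functions nat => complex (only indices < d matter);
  d x d matrices are functions nat => nat => complex; vectors in C^d (x) C^d are
  functions on pairs (a,b), and operators on C^d (x) C^d are functions of two pairs.\<close>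

definition omega :: "nat \<Rightarrow> complex" where
  "omega d = exp (2 * pi * \<i> / of_nat d)"

definition ket :: "nat \<Rightarrow> nat \<Rightarrow> complex" where
  "ket j = (\<lambda>a. if a = j then 1 else 0)"

definition mat_vec :: "nat \<Rightarrow> (nat \<Rightarrow> nat \<Rightarrow> complex) \<Rightarrow> (nat \<Rightarrow> complex) \<Rightarrow> nat \<Rightarrow> complex" where
  "mat_vec d A v = (\<lambda>x. \<Sum>y<d. A x y * v y)"

definition mat_mult :: "nat \<Rightarrow> (nat \<Rightarrow> nat \<Rightarrow> complex) \<Rightarrow> (nat \<Rightarrow> nat \<Rightarrow> complex) \<Rightarrow> nat \<Rightarrow> nat \<Rightarrow> complex" where
  "mat_mult d A B = (\<lambda>x z. \<Sum>y<d. A x y * B y z)"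

definition id_mat :: "nat \<Rightarrow> nat \<Rightarrow> complex" where
  "id_mat = (\<lambda>x y. if x = y then 1 else 0)"

definition mat_pow :: "nat \<Rightarrow> (nat \<Rightarrow> nat \<Rightarrow> complex) \<Rightarrow> nat \<Rightarrow> nat \<Rightarrow> nat \<Rightarrow> complex" where
  "mat_pow d A k = ((mat_mult d A) ^^ k) id_mat"

definition F_mat :: "nat \<Rightarrow> nat \<Rightarrow> nat \<Rightarrow> complex" where
  "F_mat d = (\<lambda>x y. omega d ^ (x * y) / complex_of_real (sqrt (real d)))"

definition D_mat :: "nat \<Rightarrow> nat \<Rightarrow> nat \<Rightarrow> complex" where
  "D_mat d = (\<lambda>x y. if x = y then omega d ^ (x ^ 2) else 0)"

text \<open>Bases: a basis is given as a map j \<mapsto> |m_j>.\<close>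
definition Z_basis :: "nat \<Rightarrow> nat \<Rightarrow> nat \<Rightarrow> complex" where
  "Z_basis d = (\<lambda>j. ket j)"

definition X_basis :: "nat \<Rightarrow> nat \<Rightarrow> nat \<Rightarrow> complex" where
  "X_basis d = (\<lambda>l. mat_vec d (F_mat d) (ket l))"

definition M_basis :: "nat \<Rightarrow> nat \<Rightarrow> nat \<Rightarrow> nat \<Rightarrow> complex" where
  "M_basis d k = (\<lambda>l. mat_vec d (mat_pow d (D_mat d) k) (mat_vec d (F_mat d) (ket l)))"

definition tensor :: "(nat \<Rightarrow> complex) \<Rightarrow> (nat \<Rightarrow> complex) \<Rightarrow> nat \<times> nat \<Rightarrow> complex" where
  "tensor v w = (\<lambda>(a, b). v a * w b)"

definition psi_plus :: "nat \<Rightarrow> nat \<times> nat \<Rightarrow> complex" where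
  "psi_plus d = (\<lambda>(a, b). \<Sum>i<d. tensor (ket i) (ket i) (a, b) / complex_of_real (sqrt (real d)))"

definition rho_iso :: "nat \<Rightarrow> real \<Rightarrow> nat \<times> nat \<Rightarrow> nat \<times> nat \<Rightarrow> complex" where
  "rho_iso d p = (\<lambda>x y. complex_of_real p * psi_plus d x * cnj (psi_plus d y)
      + complex_of_real ((1 - p) / real d ^ 2) * (if x = y then 1 else 0))"

definition expect :: "nat \<Rightarrow> (nat \<times> nat \<Rightarrow> nat \<times> nat \<Rightarrow> complex) \<Rightarrow> (nat \<times> nat \<Rightarrow> complex) \<Rightarrow> complex" where
  "expect d rho u = (\<Sum>x\<in>{..<d} \<times> {..<d}. \<Sum>y\<in>{..<d} \<times> {..<d}. cnj (u x) * rho x y * u y)"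

definition joint_prob :: "nat \<Rightarrow> (nat \<times> nat \<Rightarrow> nat \<times> nat \<Rightarrow> complex) \<Rightarrow> (nat \<Rightarrow> nat \<Rightarrow> complex) \<Rightarrow> nat \<Rightarrow> nat \<Rightarrow> real" where
  "joint_prob d rho m j k = Re (expect d rho (tensor (m j) (m k)))"

definition plogp :: "real \<Rightarrow> real" where
  "plogp x = (if x = 0 then 0 else x * log 2 x)"

definition entropy_A :: "nat \<Rightarrow> (nat \<times> nat \<Rightarrow> nat \<times> nat \<Rightarrow> complex) \<Rightarrow> (nat \<Rightarrow> nat \<Rightarrow> complex) \<Rightarrow> real" where
  "entropy_A d rho m = - (\<Sum>j<d. plogp (\<Sum>k<d. joint_prob d rho m j k))"

definition entropy_B :: "nat \<Rightarrow> (nat \<times> nat \<Rightarrow> nat \<times> nat \<Rightarrow> complex) \<Rightarrow> (nat \<Rightarrow> nat \<Rightarrow> complex) \<Rightarrow> real" where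
  "entropy_B d rho m = - (\<Sum>k<d. plogp (\<Sum>j<d. joint_prob d rho m j k))"

definition entropy_AB :: "nat \<Rightarrow> (nat \<times> nat \<Rightarrow> nat \<times> nat \<Rightarrow> complex) \<Rightarrow> (nat \<Rightarrow> nat \<Rightarrow> complex) \<Rightarrow> real" where
  "entropy_AB d rho m = - (\<Sum>j<d. \<Sum>k<d. plogp (joint_prob d rho m j k))"

definition mutual_info :: "nat \<Rightarrow> (nat \<times> nat \<Rightarrow> nat \<times> nat \<Rightarrow> complex) \<Rightarrow> (nat \<Rightarrow> nat \<Rightarrow> complex) \<Rightarrow> real" where
  "mutual_info d rho m = entropy_A d rho m + entropy_B d rho m - entropy_AB d rho m"

end

theory Submission
  imports Defs "HOL-Analysis.Complex_Transcendental"
begin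

(* For unit vectors u, v the isotropic state gives <u (x) v|rho|u (x) v> =
   p |sum_i u_i v_i|^2 / d + (1 - p) / d^2. The vectors of X and M_k have entries
   (d-th root of unity) / sqrt d, so these overlaps are character sums.
   For Z the overlap is delta_jk and for X it is [d | j + k]: the joint distribution is
   p/d + (1 - p)/d^2 on a permutation pattern and (1 - p)/d^2 elsewhere, with uniform marginals,
   which gives the stated entropy formula. For M_k the overlap is a quadratic Gauss sum with
   leading coefficient 2k divided by d; it has modulus 1/sqrt d since d is an odd prime not
   dividing 2k, so the joint distribution is uniform and the mutual information vanishes. *)

text \<open>The powers of omega d, extended to integer exponents so that phases can be subtracted.\<close>
definition add_char :: "nat \<Rightarrow> int \<Rightarrow> complex" where
  "add_char d z = exp (2 * pi * \<i> * of_int z / of_nat d)"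

lemma add_char_0 [simp]: "add_char d 0 = 1"
  by (simp add: add_char_def)

lemma add_char_add: "add_char d (a + b) = add_char d a * add_char d b"
  by (simp add: add_char_def exp_add[symmetric] distrib_left add_divide_distrib)

lemma cnj_add_char: "cnj (add_char d z) = add_char d (- z)"
  by (simp add: add_char_def exp_cnj)

lemma add_char_diff: "add_char d (a - b) = add_char d a * cnj (add_char d b)"
  by (simp add: cnj_add_char add_char_add[symmetric])

lemma norm_add_char [simp]: "cmod (add_char d z) = 1"
proof -
  have "2 * pi * \<i> * of_int z / of_nat d = \<i> * of_real (2 * pi * z / d)"
    by simp
  then show ?thesis
    unfolding add_char_def by (simp only: norm_exp_i_times)
qed

lemma add_char_power: "add_char d z ^ n = add_char d (z * int n)"
  by (simp add: add_char_def exp_of_nat_mult[symmetric] field_simps)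

lemma omega_power: "omega d ^ n = add_char d (int n)"
  by (simp add: omega_def add_char_def exp_of_nat_mult[symmetric] field_simps)

lemma add_char_eq_1_iff:
  assumes "d > 0"
  shows "add_char d z = 1 \<longleftrightarrow> int d dvd z"
proof
  assume "add_char d z = 1"
  then obtain n :: int where "2 * pi * of_int z / real d = of_int (2 * n) * pi"
    unfolding add_char_def exp_eq_1 by auto
  then have "z = n * int d"
    using assms by (simp add: field_simps) (metis of_int_eq_iff of_int_mult of_int_of_nat_eq)
  then show "int d dvd z" by simp
next
  assume "int d dvd z"
  then obtain n where "z = int d * n" ..
  then have "2 * pi * \<i> * of_int z / of_nat d = \<i> * (of_int n * (of_real pi * 2))"
    using assms by (simp add: field_simps)
  then show "add_char d z = 1"
    unfolding add_char_def by (simp only: exp_2pi_1_int)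
qed

lemma add_char_cong:
  assumes "d > 0" "int d dvd a - b"
  shows "add_char d a = add_char d b"
proof -
  have "add_char d (a - b) = 1"
    using assms by (simp add: add_char_eq_1_iff)
  then show ?thesis
    using add_char_add[of d "a - b" b] by simp
qed

lemma sum_add_char_linear:
  assumes "d > 0"
  shows "(\<Sum>y<d. add_char d (c * int y)) = (if int d dvd c then of_nat d else 0)"
proof (cases "int d dvd c")
  case True
  then have "add_char d (c * int y) = 1" for y
    using assms by (simp add: add_char_eq_1_iff)
  then show ?thesis
    using True by simp
next
  case False
  then have "add_char d c \<noteq> 1"
    using assms by (simp add: add_char_eq_1_iff)
  then have "(\<Sum>y<d. add_char d c ^ y) = (add_char d c ^ d - 1) / (add_char d c - 1)"
    by (rule geometric_sum)
  moreover have "add_char d c ^ d = 1"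
    using assms by (simp add: add_char_power add_char_eq_1_iff)
  ultimately show ?thesis
    using False by (simp add: add_char_power)
qed

lemma sum_lessThan_shift_periodic:
  fixes h :: "nat \<Rightarrow> 'a::cancel_comm_monoid_add"
  assumes "\<And>n. h (n + d) = h n"
  shows "(\<Sum>t<d. h (y + t)) = (\<Sum>t<d. h t)"
proof (induction y)
  case (Suc y)
  have "(\<Sum>t<d. h (Suc y + t)) + h y = h y + (\<Sum>t<d. h (y + Suc t))"
    by (simp add: add.commute)
  also have "\<dots> = (\<Sum>t<Suc d. h (y + t))"
    by (simp only: sum.lessThan_Suc_shift add_0_right)
  also have "\<dots> = (\<Sum>t<d. h (y + t)) + h y"
    using assms[of y] by (simp add: add.assoc)
  finally show ?case
    using Suc.IH by simp
qed simp

lemma add_char_quadratic_periodic: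
  assumes "d > 0"
  shows "add_char d (a * (x + int d) ^ 2 + b * (x + int d)) = add_char d (a * x ^ 2 + b * x)"
proof (rule add_char_cong[OF assms])
  have "a * (x + int d) ^ 2 + b * (x + int d) = a * x ^ 2 + b * x + int d * (a * (2 * x + int d) + b)"
    by (simp add: algebra_simps power2_eq_square)
  then show "int d dvd (a * (x + int d) ^ 2 + b * (x + int d)) - (a * x ^ 2 + b * x)"
    by simp
qed

theorem gauss_sum_norm_sq:
  assumes "odd d" "coprime a (int d)"
  shows "cmod (\<Sum>x<d. add_char d (a * int x ^ 2 + b * int x)) ^ 2 = real d"
proof -
  define q where "q x = a * int x ^ 2 + b * int x" for x
  define G where "G = (\<Sum>x<d. add_char d (q x))"
  have d0: "d > 0"
    using assms(1) by (simp add: odd_pos)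
  have expand: "q (y + t) - q y = q t + 2 * a * int t * int y" for y t
    by (simp add: q_def algebra_simps power2_eq_square)
  have periodic: "add_char d (q (n + d) - c) = add_char d (q n - c)" for n c
    by (simp only: add_char_diff q_def of_nat_add add_char_quadratic_periodic[OF d0])
  have only_zero: "int d dvd 2 * a * int t \<longleftrightarrow> t = 0" if "t < d" for t
  proof -
    have "coprime (2 * a) (int d)"
      using assms by simp
    then have "int d dvd 2 * a * int t \<longleftrightarrow> d dvd t"
      by (simp add: coprime_commute coprime_dvd_mult_right_iff)
    then show ?thesis
      using that by auto
  qed
  \<comment> \<open>Substituting x = y + t (mod d) makes the inner sum over y a linear character sum,
    which vanishes unless t = 0.\<close>
  have "G * cnj G = (\<Sum>y<d. \<Sum>x<d. add_char d (q x - q y))"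
    unfolding G_def by (simp add: sum_product add_char_diff) (rule sum.swap)
  also have "\<dots> = (\<Sum>y<d. \<Sum>t<d. add_char d (q (y + t) - q y))"
    by (intro sum.cong refl sum_lessThan_shift_periodic[symmetric] periodic)
  also have "\<dots> = (\<Sum>t<d. add_char d (q t) * (\<Sum>y<d. add_char d (2 * a * int t * int y)))"
    by (simp add: expand add_char_add sum_distrib_left) (rule sum.swap)
  also have "\<dots> = (\<Sum>t<d. if t = 0 then of_nat d else 0)"
    by (intro sum.cong refl) (simp add: sum_add_char_linear[OF d0] only_zero q_def)
  also have "\<dots> = of_nat d"
    using d0 by simp
  finally have "of_real (cmod G ^ 2) = (of_nat d :: complex)"
    by (simp only: complex_norm_square)
  then show ?thesis
    unfolding G_def q_def by (metis of_real_eq_iff of_real_of_nat_eq)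
qed

lemma sqrt_mult_sqrt_complex: "complex_of_real (sqrt (real d)) * complex_of_real (sqrt (real d)) = of_nat d"
  by (simp flip: of_real_mult)

lemma X_basis_apply:
  assumes "l < d"
  shows "X_basis d l i = add_char d (int i * int l) / complex_of_real (sqrt (real d))"
  using assms by (simp add: X_basis_def mat_vec_def ket_def F_mat_def omega_power if_distrib if_distribR cong: if_cong)

lemma mat_pow_D_mat:
  assumes "x < d"
  shows "mat_pow d (D_mat d) k x y = (if x = y then add_char d (int k * int x ^ 2) else 0)"
proof (induction k arbitrary: y)
  case 0
  show ?case
    by (simp add: mat_pow_def id_mat_def)
next
  case (Suc k)
  have D_mat_diag: "D_mat d x x = add_char d (int (x ^ 2))"
    by (simp add: D_mat_def omega_power)
  have "mat_pow d (D_mat d) (Suc k) x y = D_mat d x x * mat_pow d (D_mat d) k x y"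
    using assms by (simp add: mat_pow_def mat_mult_def D_mat_def if_distrib if_distribR cong: if_cong)
  also have "\<dots> = add_char d (int (x ^ 2)) * (if x = y then add_char d (int k * int x ^ 2) else 0)"
    by (simp only: Suc.IH D_mat_diag)
  also have "\<dots> = (if x = y then add_char d (int (x ^ 2) + int k * int x ^ 2) else 0)"
    by (simp add: add_char_add)
  finally show ?case
    by (simp add: algebra_simps)
qed

lemma M_basis_apply:
  assumes "l < d" "i < d"
  shows "M_basis d k l i = add_char d (int k * int i ^ 2 + int i * int l) / complex_of_real (sqrt (real d))"
proof -
  have "M_basis d k l i = (\<Sum>y<d. mat_pow d (D_mat d) k i y * X_basis d l y)"
    by (simp add: M_basis_def X_basis_def mat_vec_def)
  also have "\<dots> = add_char d (int k * int i ^ 2) * X_basis d l i"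
    using assms(2) by (simp add: mat_pow_D_mat if_distrib if_distribR cong: if_cong)
  finally show ?thesis
    using assms(1) by (simp add: X_basis_apply add_char_add)
qed

lemma flat_vector_norm:
  assumes "d > 0" "\<And>i. i < d \<Longrightarrow> v i = add_char d (\<phi> i) / complex_of_real (sqrt (real d))"
  shows "(\<Sum>i<d. cmod (v i) ^ 2) = 1"
  using assms by (simp add: norm_divide power_divide)

lemma flat_vector_overlap:
  assumes "\<And>i. i < d \<Longrightarrow> v i = add_char d (\<phi> i) / complex_of_real (sqrt (real d))"
    and "\<And>i. i < d \<Longrightarrow> w i = add_char d (\<psi> i) / complex_of_real (sqrt (real d))"
  shows "(\<Sum>i<d. v i * w i) = (\<Sum>i<d. add_char d (\<phi> i + \<psi> i)) / of_nat d"
  using assms by (simp add: sum_divide_distrib add_char_add sqrt_mult_sqrt_complex)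

lemma expect_rank_one_plus_identity:
  "expect d (\<lambda>x y. of_real a * f x * cnj (f y) + of_real b * (if x = y then 1 else 0)) u
   = of_real (a * cmod (\<Sum>x\<in>{..<d} \<times> {..<d}. cnj (u x) * f x) ^ 2
              + b * (\<Sum>x\<in>{..<d} \<times> {..<d}. cmod (u x) ^ 2))"
proof -
  let ?S = "{..<d} \<times> {..<d}"
  let ?A = "\<Sum>x\<in>?S. cnj (u x) * f x"
  have summand: "cnj (u x) * (of_real a * f x * cnj (f y) + of_real b * (if x = y then 1 else 0)) * u y
      = of_real a * ((cnj (u x) * f x) * cnj (cnj (u y) * f y))
        + (if y = x then of_real b * (cnj (u x) * u x) else 0)" for x y
    by (simp add: algebra_simps)
  have rank_one: "of_real a * (?A * cnj ?A)
      = (\<Sum>x\<in>?S. \<Sum>y\<in>?S. of_real a * ((cnj (u x) * f x) * cnj (cnj (u y) * f y)))"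
    unfolding cnj_sum sum_product by (simp only: sum_distrib_left)
  have "expect d (\<lambda>x y. of_real a * f x * cnj (f y) + of_real b * (if x = y then 1 else 0)) u
      = of_real a * (?A * cnj ?A) + of_real b * (\<Sum>x\<in>?S. cnj (u x) * u x)"
    unfolding expect_def summand sum.distrib rank_one
    by (simp add: sum_distrib_left)
  also have "?A * cnj ?A = of_real (cmod ?A ^ 2)"
    by (rule complex_norm_square[symmetric])
  also have "(\<Sum>x\<in>?S. cnj (u x) * u x) = of_real (\<Sum>x\<in>?S. cmod (u x) ^ 2)"
    unfolding of_real_sum complex_norm_square by (simp add: mult.commute)
  finally show ?thesis
    by simp
qed

lemma psi_plus_apply:
  assumes "a < d"
  shows "psi_plus d (a, b) = (if a = b then 1 else 0) / complex_of_real (sqrt (real d))"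
proof -
  have "psi_plus d (a, b) = (\<Sum>i<d. if i = a then (if a = b then 1 else 0) else 0) / complex_of_real (sqrt (real d))"
    unfolding psi_plus_def tensor_def ket_def prod.case sum_divide_distrib[symmetric]
    by (intro arg_cong2[where f = "(/)"] sum.cong) auto
  then show ?thesis
    using assms by simp
qed

lemma psi_plus_overlap:
  "(\<Sum>x\<in>{..<d} \<times> {..<d}. cnj (tensor u v x) * psi_plus d x)
   = cnj (\<Sum>i<d. u i * v i) / complex_of_real (sqrt (real d))"
proof -
  have "(\<Sum>x\<in>{..<d} \<times> {..<d}. cnj (tensor u v x) * psi_plus d x)
      = (\<Sum>a<d. \<Sum>b<d. if b = a then cnj (u a * v a) / complex_of_real (sqrt (real d)) else 0)"
    unfolding sum.cartesian_product'
    by (intro sum.cong refl) (simp add: tensor_def psi_plus_apply)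
  then show ?thesis
    by (simp add: sum_divide_distrib)
qed

lemma sum_norm_tensor:
  "(\<Sum>x\<in>A \<times> B. cmod (tensor u v x) ^ 2) = (\<Sum>a\<in>A. cmod (u a) ^ 2) * (\<Sum>b\<in>B. cmod (v b) ^ 2)"
  unfolding sum.cartesian_product' sum_product
  by (simp add: tensor_def norm_mult power_mult_distrib)

lemma joint_prob_rho_iso:
  assumes "(\<Sum>i<d. cmod (m j i) ^ 2) = 1" "(\<Sum>i<d. cmod (m k i) ^ 2) = 1"
  shows "joint_prob d (rho_iso d p) m j k
           = p * cmod (\<Sum>i<d. m j i * m k i) ^ 2 / real d + (1 - p) / real d ^ 2"
proof -
  have "cmod (cnj (\<Sum>i<d. m j i * m k i) / complex_of_real (sqrt (real d))) ^ 2
      = cmod (\<Sum>i<d. m j i * m k i) ^ 2 / real d"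
    by (simp only: complex_mod_cnj norm_divide power_divide norm_of_real) simp
  then show ?thesis
    unfolding joint_prob_def rho_iso_def expect_rank_one_plus_identity psi_plus_overlap
      sum_norm_tensor assms
    by simp
qed

lemma joint_prob_Z_basis:
  assumes "j < d" "k < d"
  shows "joint_prob d (rho_iso d p) (Z_basis d) j k
           = (if j = k then p / real d + (1 - p) / real d ^ 2 else (1 - p) / real d ^ 2)"
proof -
  have "(\<Sum>i<d. cmod (Z_basis d l i) ^ 2) = 1" if "l < d" for l
    using that by (simp add: Z_basis_def ket_def if_distrib if_distribR cong: if_cong)
  moreover have "(\<Sum>i<d. Z_basis d j i * Z_basis d k i) = (\<Sum>i<d. if i = j then (if j = k then 1 else 0) else 0)"
    by (intro sum.cong refl) (simp add: Z_basis_def ket_def)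
  ultimately show ?thesis
    using assms by (simp add: joint_prob_rho_iso)
qed

lemma joint_prob_X_basis:
  assumes "j < d" "k < d"
  shows "joint_prob d (rho_iso d p) (X_basis d) j k
           = (if d dvd j + k then p / real d + (1 - p) / real d ^ 2 else (1 - p) / real d ^ 2)"
proof -
  have d0: "d > 0"
    using assms by simp
  have "(\<Sum>i<d. cmod (X_basis d l i) ^ 2) = 1" if "l < d" for l
    by (rule flat_vector_norm[OF d0]) (rule X_basis_apply[OF that])
  moreover have "(\<Sum>i<d. X_basis d j i * X_basis d k i)
      = (\<Sum>i<d. add_char d ((int j + int k) * int i)) / of_nat d"
    using flat_vector_overlap[of d "X_basis d j" _ "X_basis d k"] assms
    by (simp add: X_basis_apply algebra_simps)
  moreover have "int d dvd int j + int k \<longleftrightarrow> d dvd j + k"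
    by (metis of_nat_add of_nat_dvd_iff)
  ultimately show ?thesis
    using assms d0 by (simp add: joint_prob_rho_iso sum_add_char_linear)
qed

lemma joint_prob_M_basis:
  assumes "prime d" "odd d" "0 < k" "k < d" "j < d" "l < d"
  shows "joint_prob d (rho_iso d p) (M_basis d k) j l = 1 / real d ^ 2"
proof -
  let ?G = "\<Sum>i<d. add_char d (int (2 * k) * int i ^ 2 + int (j + l) * int i)"
  have d0: "d > 0"
    using assms by simp
  have unit: "(\<Sum>i<d. cmod (M_basis d k l' i) ^ 2) = 1" if "l' < d" for l'
    by (rule flat_vector_norm[OF d0]) (rule M_basis_apply[OF that])
  have "(\<Sum>i<d. M_basis d k j i * M_basis d k l i) = ?G / of_nat d"
    using flat_vector_overlap[of d "M_basis d k j" _ "M_basis d k l"] assms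
    by (simp add: M_basis_apply algebra_simps)
  moreover have "coprime (int (2 * k)) (int d)"
  proof -
    have "\<not> d dvd k"
      using assms(3,4) by (auto dest: dvd_imp_le)
    then show ?thesis
      using assms(1,2) by (simp add: prime_imp_coprime coprime_commute)
  qed
  then have "cmod ?G ^ 2 = real d"
    using assms(2) by (rule gauss_sum_norm_sq[rotated])
  ultimately have "cmod (\<Sum>i<d. M_basis d k j i * M_basis d k l i) ^ 2 = 1 / real d"
    by (simp add: norm_divide power_divide power2_eq_square)
  then show ?thesis
    using assms d0 unit by (simp add: joint_prob_rho_iso field_simps power2_eq_square)
qed

lemma plogp_eq: "plogp x = x * log 2 x"
  by (simp add: plogp_def)

lemma sum_if_unique:
  fixes u v :: real
  assumes "finite A" "\<exists>!x. x \<in> A \<and> P x"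
  shows "(\<Sum>x\<in>A. if P x then u else v) = u + (real (card A) - 1) * v"
proof -
  obtain x0 where "x0 \<in> A" "A \<inter> {x. P x} = {x0}" "A \<inter> - {x. P x} = A - {x0}"
    using assms(2) by auto
  then have "(\<Sum>x\<in>A. if P x then u else v) = u + real (card (A - {x0})) * v"
    using assms(1) by (simp add: sum.If_cases)
  moreover have "card A \<ge> 1"
    using \<open>x0 \<in> A\<close> assms(1) by (metis One_nat_def Suc_leI card_gt_0_iff empty_iff)
  ultimately show ?thesis
    using \<open>x0 \<in> A\<close> assms(1) by (simp add: of_nat_diff)
qed

lemma mutual_info_two_level:
  fixes \<alpha> \<beta> :: real
  assumes "d > 0"
    and joint: "\<And>j k. j < d \<Longrightarrow> k < d \<Longrightarrow> joint_prob d rho m j k = (if R j k then \<alpha> else \<beta>)"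
    and row: "\<And>j. j < d \<Longrightarrow> \<exists>!k. k < d \<and> R j k"
    and col: "\<And>k. k < d \<Longrightarrow> \<exists>!j. j < d \<and> R j k"
    and total: "\<alpha> + (real d - 1) * \<beta> = 1 / real d"
  shows "mutual_info d rho m
           = 2 * log 2 (real d) + real d * \<alpha> * log 2 \<alpha> + (real d ^ 2 - real d) * \<beta> * log 2 \<beta>"
proof -
  have "(\<Sum>k<d. joint_prob d rho m j k) = 1 / real d" if "j < d" for j
    using that total sum_if_unique[of "{..<d}" "R j"] row[OF that] by (simp add: joint)
  then have HA: "entropy_A d rho m = log 2 (real d)"
    using assms(1) by (simp add: entropy_A_def plogp_eq log_divide)
  have "(\<Sum>j<d. joint_prob d rho m j k) = 1 / real d" if "k < d" for k
    using that total sum_if_unique[of "{..<d}" "\<lambda>j. R j k"] col[OF that] by (simp add: joint)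
  then have HB: "entropy_B d rho m = log 2 (real d)"
    using assms(1) by (simp add: entropy_B_def plogp_eq log_divide)
  have "(\<Sum>k<d. plogp (joint_prob d rho m j k)) = plogp \<alpha> + (real d - 1) * plogp \<beta>" if "j < d" for j
    using that sum_if_unique[of "{..<d}" "R j"] row[OF that] by (simp add: joint if_distrib cong: if_cong)
  then have HAB: "entropy_AB d rho m = - (real d * (plogp \<alpha> + (real d - 1) * plogp \<beta>))"
    by (simp add: entropy_AB_def)
  show ?thesis
    unfolding mutual_info_def HA HB HAB plogp_eq by (simp add: algebra_simps power2_eq_square)
qed

lemma ex1_lessThan_dvd_add:
  fixes d j :: nat
  assumes "d > 0"
  shows "\<exists>!k. k < d \<and> d dvd j + k"
proof (rule ex_ex1I)
  show "\<exists>k. k < d \<and> d dvd j + k"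
  proof
    have "(j + (d - j mod d)) mod d = (j mod d + (d - j mod d)) mod d"
      by (simp add: mod_add_left_eq)
    also have "\<dots> = 0"
      using assms by simp
    finally show "(d - j mod d) mod d < d \<and> d dvd j + (d - j mod d) mod d"
      using assms by (simp add: mod_add_right_eq dvd_eq_mod_eq_0)
  qed
next
  have "k' \<le> k" if "k' < d" "d dvd j + k" "d dvd j + k'" for k k'
  proof -
    have "d dvd k' - k"
      using dvd_diff_nat[OF that(3,2)] by simp
    moreover have "k' - k < d"
      using that(1) by linarith
    ultimately show ?thesis
      using nat_dvd_not_less by fastforce
  qed
  then show "k = k'" if "k < d \<and> d dvd j + k" "k' < d \<and> d dvd j + k'" for k k'
    using that by (meson le_antisym)
qed

lemma mutual_info_Z_basis:
  assumes "d > 0"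
  shows "mutual_info d (rho_iso d p) (Z_basis d) =
        2 * log 2 (real d)
        + real d * (p / real d + (1 - p) / real d ^ 2) * log 2 (p / real d + (1 - p) / real d ^ 2)
        + (real d ^ 2 - real d) * ((1 - p) / real d ^ 2) * log 2 ((1 - p) / real d ^ 2)"
proof (rule mutual_info_two_level[OF assms, where R = "(=)"])
  show "p / real d + (1 - p) / real d ^ 2 + (real d - 1) * ((1 - p) / real d ^ 2) = 1 / real d"
    using assms by (simp add: field_simps power2_eq_square)
qed (auto simp: joint_prob_Z_basis)

lemma mutual_info_X_basis:
  assumes "d > 0"
  shows "mutual_info d (rho_iso d p) (X_basis d) =
        2 * log 2 (real d)
        + real d * (p / real d + (1 - p) / real d ^ 2) * log 2 (p / real d + (1 - p) / real d ^ 2)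
        + (real d ^ 2 - real d) * ((1 - p) / real d ^ 2) * log 2 ((1 - p) / real d ^ 2)"
proof (rule mutual_info_two_level[OF assms, where R = "\<lambda>j k. d dvd j + k"])
  show "p / real d + (1 - p) / real d ^ 2 + (real d - 1) * ((1 - p) / real d ^ 2) = 1 / real d"
    using assms by (simp add: field_simps power2_eq_square)
qed (simp_all add: joint_prob_X_basis ex1_lessThan_dvd_add[OF assms] add.commute)

lemma mutual_info_M_basis:
  assumes "prime d" "odd d" "0 < k" "k < d"
  shows "mutual_info d (rho_iso d p) (M_basis d k) = 0"
proof -
  let ?c = "1 / real d ^ 2"
  have d0: "d > 0"
    using assms(4) by simp
  have "mutual_info d (rho_iso d p) (M_basis d k)
      = 2 * log 2 (real d) + real d * ?c * log 2 ?c + (real d ^ 2 - real d) * ?c * log 2 ?c"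
  proof (rule mutual_info_two_level[OF d0, where R = "(=)"])
    show "?c + (real d - 1) * ?c = 1 / real d"
      using d0 by (simp add: field_simps power2_eq_square)
  qed (auto simp: joint_prob_M_basis[OF assms])
  also have "\<dots> = 0"
    using d0 by (simp add: log_divide log_mult field_simps power2_eq_square)
  finally show ?thesis .
qed

theorem proposition5:
  fixes d :: nat and p :: real
  assumes "prime d" and "d \<ge> 3"
    and "- 1 / (real d ^ 2 - 1) \<le> p" and "p \<le> 1"
  shows "(\<forall>k\<in>{1..d-1}. mutual_info d (rho_iso d p) (M_basis d k) = 0)
    \<and> mutual_info d (rho_iso d p) (Z_basis d) = mutual_info d (rho_iso d p) (X_basis d)
    \<and> mutual_info d (rho_iso d p) (Z_basis d) =
        2 * log 2 (real d)
        + real d * (p / real d + (1 - p) / real d ^ 2) * log 2 (p / real d + (1 - p) / real d ^ 2)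
        + (real d ^ 2 - real d) * ((1 - p) / real d ^ 2) * log 2 ((1 - p) / real d ^ 2)"
proof -
  \<comment> \<open>The bounds on p only make rho a state; the identities hold for every p,
    because plogp x = x * log 2 x even where log 2 x is a junk value.\<close>
  have "d > 0" "odd d"
    using assms(1,2) prime_odd_nat[of d] by auto
  then show ?thesis
    using assms(1) mutual_info_Z_basis mutual_info_X_basis mutual_info_M_basis by auto
qed

end
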